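(* Let $\delta \ge 0$. For each integer $n \ge 1$ let $\rho_n > 0$ be the positive solution of the equation $$\int_{1/n}^\infty e^{-\rho_n x}\,Q(dx) = \bar{Q}(1/n) + \delta - \frac{\sigma^2}{2}\rho_n^2 + \mu\rho_n,$$ equivalently of $\delta - \frac{\sigma^2}{2}\rho_n^2 + \mu\rho_n + \int_{1/n}^\infty (1-e^{-\rho_n x})\,Q(dx) = 0$. Then $\rho_n$ converges, as $n \to \infty$, to the unique solution $\rho > 0$ of the generalized Lundberg equation $\delta = \varphi_D(\rho)$.
   Context: Let $\{B_t\}_{t\ge 0}$ be a standard Brownian motion and $\{G_t\}_{t\ge0}$ an independent subordinator (non-decreasing Lévy process) with drift $\mu \ge 0$ and Lévy measure $Q(dx) = q(x)\,dx$ on $(0,\infty)$, where $\int_0^\infty (1\wedge x)\,Q(dx) < \infty$. Let $\sigma > 0$ and $D_t = G_t + \sigma B_t$. Its Laplace exponent is $$\varphi_D(u) = -\mu u + \int_0^\infty (e^{-ux}-1)\,Q(dx) + \tfrac12 u^2\sigma^2,$$ so that $\mathbb{E}[e^{-uD_t}] = e^{t\varphi_D(u)}$ for $u \ge 0$. Write $\bar{Q}(x) = Q([x,\infty))$ for $x > 0$. *)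

theory Defs
  imports "HOL-Analysis.Analysis"
begin

definition levyQ :: "(real \<Rightarrow> real) \<Rightarrow> real measure" where
  "levyQ q = density lborel (\<lambda>x. indicator {0<..} x * ennreal (q x))"

text \<open>Laplace exponent of D_t = G_t + sigma B_t, with drift mu and Levy density q.\<close>
definition phiD :: "real \<Rightarrow> real \<Rightarrow> (real \<Rightarrow> real) \<Rightarrow> real \<Rightarrow> real" where
  "phiD \<mu> \<sigma> q u =
     - \<mu> * u + (LINT x | levyQ q. exp (- u * x) - 1) + u\<^sup>2 * \<sigma>\<^sup>2 / 2"

end

theory Submission
  imports Defs
begin

text \<open>Let \<open>\<Lambda>\<^sub>A(u)\<close> be the integral of \<open>1 - exp(-ux)\<close> over \<open>A\<close> with respect to \<open>Q\<close>. Since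
  \<open>1 - exp(-s)\<close> is concave and vanishes at 0, \<open>l \<Lambda>\<^sub>A(u) \<le> \<Lambda>\<^sub>A(l u)\<close> for \<open>0 \<le> l \<le> 1\<close>; hence
  \<open>(\<delta> + \<mu>u + \<Lambda>\<^sub>A(u))/u\<close> is nonincreasing while \<open>\<sigma>\<^sup>2u/2\<close> is strictly increasing, so the
  positive root of \<open>\<delta> + \<mu>u + \<Lambda>\<^sub>A(u) - \<sigma>\<^sup>2u\<^sup>2/2\<close> is unique and increases with \<open>A\<close>.
  The roots \<open>\<rho>\<^sub>n\<close> for \<open>A = [1/n, \<infinity>)\<close> are bounded thanks to \<open>\<integral> min 1 x Q(dx) < \<infinity>\<close>, so they
  increase to a limit, and dominated convergence shows that the limit is the root for
  \<open>A = (0, \<infinity>)\<close>, i.e. the solution of \<open>\<phi>\<^sub>D(\<rho>) = \<delta>\<close>.\<close>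

lemma one_minus_exp_le_min:
  fixes u x :: real
  assumes "0 \<le> u" "0 < x"
  shows "1 - exp (- u * x) \<le> max 1 u * min 1 x"
proof (cases "x \<le> 1")
  case True
  have "1 - exp (- u * x) \<le> u * x" using exp_ge_add_one_self[of "- u * x"] by simp
  also have "\<dots> \<le> max 1 u * x" using assms by (intro mult_right_mono) auto
  finally show ?thesis using True by simp
next
  case False
  have "1 - exp (- u * x) \<le> 1" by simp
  also have "1 \<le> max 1 u * min 1 x" using False by simp
  finally show ?thesis .
qed

lemma one_minus_exp_superhomogeneous:
  fixes s l :: real
  assumes "0 \<le> l" "l \<le> 1"
  shows "l * (1 - exp (- s)) \<le> 1 - exp (- (l * s))"
proof -
  have "exp ((1 - l) *\<^sub>R 0 + l *\<^sub>R (- s)) \<le> (1 - l) * exp 0 + l * exp (- s)"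
    using convex_onD[OF exp_convex, of l 0 "- s"] assms by auto
  then show ?thesis by (simp add: algebra_simps)
qed

lemma root_le_of_superhomogeneous:
  fixes G :: "real \<Rightarrow> real"
  assumes sigma: "\<sigma> > 0" and delta: "\<delta> \<ge> 0"
    and G: "\<And>a l. 0 \<le> l \<Longrightarrow> l \<le> 1 \<Longrightarrow> 0 \<le> a \<Longrightarrow> l * G a \<le> G (l * a)"
    and a: "0 < a" and b: "0 < b"
    and ga: "\<delta> + \<mu> * a + G a - \<sigma>\<^sup>2 / 2 * a\<^sup>2 \<ge> 0"
    and gb: "\<delta> + \<mu> * b + G b - \<sigma>\<^sup>2 / 2 * b\<^sup>2 = 0"
  shows "a \<le> b"
proof (rule ccontr)
  assume "\<not> a \<le> b"
  define l where "l = b / a"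
  have l: "0 < l" "l < 1" using a b \<open>\<not> a \<le> b\<close> by (auto simp: l_def)
  have b_eq: "b = l * a" using a by (simp add: l_def)
  have "l * G a \<le> G b" using G[of l a] l a b_eq by simp
  then have upper: "\<delta> + \<mu> * b + l * G a - \<sigma>\<^sup>2 / 2 * a\<^sup>2 * l\<^sup>2 \<le> 0"
    using gb b_eq by (simp add: power_mult_distrib algebra_simps)
  have "l * (\<delta> + \<mu> * a + G a - \<sigma>\<^sup>2 / 2 * a\<^sup>2) \<ge> 0" using ga l by simp
  then have lower: "l * \<delta> + \<mu> * b + l * G a - \<sigma>\<^sup>2 / 2 * a\<^sup>2 * l \<ge> 0"
    using b_eq by (simp add: algebra_simps)
  have "l\<^sup>2 < l" using l by (simp add: power2_eq_square)
  then have "\<sigma>\<^sup>2 / 2 * a\<^sup>2 * (l - l\<^sup>2) > 0" using sigma a by simp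
  moreover have "(1 - l) * \<delta> \<ge> 0" using l delta by simp
  ultimately show False using upper lower by (simp add: algebra_simps)
qed

locale levy_measure =
  fixes M :: "real measure"
  assumes sets_M: "sets M = sets borel"
    and AE_pos: "AE x in M. 0 < x"
    and integrable_min_1: "integrable M (\<lambda>x. min 1 x)"
begin

definition levy_integral :: "real set \<Rightarrow> real \<Rightarrow> real" where
  "levy_integral A u = (LINT x:A|M. 1 - exp (- u * x))"

declare sets_M [measurable_cong]

lemma integrable_one_minus_exp:
  assumes "0 \<le> u"
  shows "integrable M (\<lambda>x. 1 - exp (- u * x))"
proof (rule Bochner_Integration.integrable_bound)
  show "integrable M (\<lambda>x. max 1 u * min 1 x)" using integrable_min_1 by simp
  show "(\<lambda>x. 1 - exp (- u * x)) \<in> borel_measurable M" by measurable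
  show "AE x in M. norm (1 - exp (- u * x)) \<le> norm (max 1 u * min 1 x)"
    using AE_pos
  proof eventually_elim
    case (elim x)
    have "exp (- u * x) \<le> 1" using assms elim by simp
    then show ?case using one_minus_exp_le_min[OF assms elim] elim by simp
  qed
qed

lemma set_integrable_one_minus_exp:
  "A \<in> sets borel \<Longrightarrow> 0 \<le> u \<Longrightarrow> set_integrable M A (\<lambda>x. 1 - exp (- u * x))"
  unfolding set_integrable_def
  by (metis integrable_mult_indicator integrable_one_minus_exp sets_M)

lemma levy_integral_UNIV: "levy_integral UNIV u = (LINT x|M. 1 - exp (- u * x))"
  by (simp add: levy_integral_def set_lebesgue_integral_def)

lemma levy_integral_superhomogeneous:
  assumes "A \<in> sets borel" "0 \<le> l" "l \<le> 1" "0 \<le> u"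
  shows "l * levy_integral A u \<le> levy_integral A (l * u)"
proof -
  have "l * levy_integral A u = (LINT x:A|M. l * (1 - exp (- u * x)))"
    by (simp add: levy_integral_def)
  also have "\<dots> \<le> levy_integral A (l * u)"
    unfolding levy_integral_def
  proof (rule set_integral_mono)
    show "set_integrable M A (\<lambda>x. l * (1 - exp (- u * x)))"
      using set_integrable_one_minus_exp assms by (simp add: set_integrable_mult_right)
    show "set_integrable M A (\<lambda>x. 1 - exp (- (l * u) * x))"
      using set_integrable_one_minus_exp assms by simp
    show "l * (1 - exp (- u * x)) \<le> 1 - exp (- (l * u) * x)" for x
      using one_minus_exp_superhomogeneous[OF assms(2,3), of "u * x"] by (simp add: mult.assoc)
  qed
  finally show ?thesis .
qed

lemma levy_integral_mono_set:
  assumes "A \<subseteq> B" "B \<in> sets borel" "A \<in> sets borel" "0 \<le> u"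
  shows "levy_integral A u \<le> levy_integral B u"
  unfolding levy_integral_def set_lebesgue_integral_def
proof (rule integral_mono_AE)
  show "integrable M (\<lambda>x. indicator A x *\<^sub>R (1 - exp (- u * x)))"
    "integrable M (\<lambda>x. indicator B x *\<^sub>R (1 - exp (- u * x)))"
    using set_integrable_one_minus_exp assms unfolding set_integrable_def by auto
  show "AE x in M. indicator A x *\<^sub>R (1 - exp (- u * x)) \<le> indicator B x *\<^sub>R (1 - exp (- u * x))"
    using AE_pos
  proof eventually_elim
    case (elim x)
    have "exp (- u * x) \<le> 1" using assms elim by simp
    then show ?case using assms(1) by (auto simp: indicator_def)
  qed
qed

lemma levy_integral_le:
  assumes "A \<in> sets borel" "0 \<le> u"
  shows "levy_integral A u \<le> max 1 u * (LINT x|M. min 1 x)"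
proof -
  have "levy_integral A u \<le> levy_integral UNIV u"
    using assms by (intro levy_integral_mono_set) auto
  also have "\<dots> \<le> (LINT x|M. max 1 u * min 1 x)"
    unfolding levy_integral_UNIV
  proof (rule integral_mono_AE)
    show "integrable M (\<lambda>x. 1 - exp (- u * x))" using integrable_one_minus_exp assms by simp
    show "integrable M (\<lambda>x. max 1 u * min 1 x)" using integrable_min_1 by simp
    show "AE x in M. 1 - exp (- u * x) \<le> max 1 u * min 1 x"
      using AE_pos by eventually_elim (use one_minus_exp_le_min assms in auto)
  qed
  finally show ?thesis by simp
qed

lemma tendsto_levy_integral:
  assumes u: "u \<longlonglongrightarrow> L" "\<And>k. 0 \<le> u k"
    and A: "\<And>k. A k \<in> sets borel" "\<And>x. 0 < x \<Longrightarrow> eventually (\<lambda>k. x \<in> A k) sequentially"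
  shows "(\<lambda>k. levy_integral (A k) (u k)) \<longlonglongrightarrow> levy_integral UNIV L"
proof -
  obtain B where B: "\<And>k. norm (u k) \<le> B"
    using convergent_imp_Bseq[OF convergentI[OF u(1)]] unfolding Bseq_def by auto
  show ?thesis
    unfolding levy_integral_def set_lebesgue_integral_def
  proof (rule integral_dominated_convergence[where w = "\<lambda>x. max 1 B * min 1 x"])
    show "integrable M (\<lambda>x. max 1 B * min 1 x)" using integrable_min_1 by simp
    show "(\<lambda>x. indicator UNIV x *\<^sub>R (1 - exp (- L * x))) \<in> borel_measurable M" by measurable
    show "(\<lambda>x. indicator (A k) x *\<^sub>R (1 - exp (- u k * x))) \<in> borel_measurable M" for k
      using A(1) by measurable
    show "AE x in M. (\<lambda>k. indicator (A k) x *\<^sub>R (1 - exp (- u k * x)))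
                       \<longlonglongrightarrow> indicator UNIV x *\<^sub>R (1 - exp (- L * x))"
      using AE_pos
    proof eventually_elim
      case (elim x)
      have "(\<lambda>k. 1 - exp (- u k * x)) \<longlonglongrightarrow> 1 - exp (- L * x)"
        by (intro tendsto_intros u(1))
      moreover have "eventually (\<lambda>k. 1 - exp (- u k * x) = indicator (A k) x *\<^sub>R (1 - exp (- u k * x)))
              sequentially"
        using A(2)[OF elim] by eventually_elim simp
      ultimately have "(\<lambda>k. indicator (A k) x *\<^sub>R (1 - exp (- u k * x))) \<longlonglongrightarrow> 1 - exp (- L * x)"
        by (rule Lim_transform_eventually)
      then show ?case by simp
    qed
    show "AE x in M. norm (indicator (A k) x *\<^sub>R (1 - exp (- u k * x))) \<le> max 1 B * min 1 x" for k
      using AE_pos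
    proof eventually_elim
      case (elim x)
      have "exp (- u k * x) \<le> 1" using u(2)[of k] elim by simp
      moreover have "1 - exp (- u k * x) \<le> max 1 (u k) * min 1 x"
        using one_minus_exp_le_min u(2) elim by simp
      moreover have "max 1 (u k) * min 1 x \<le> max 1 B * min 1 x"
        using B[of k] elim by (intro mult_right_mono) auto
      moreover have "0 \<le> max 1 B * min 1 x" using elim by simp
      ultimately show ?case by (auto simp: indicator_def)
    qed
  qed
qed

end

locale lundberg_equation = levy_measure +
  fixes \<mu> \<sigma> \<delta> :: real
  assumes sigma: "\<sigma> > 0" and delta: "\<delta> \<ge> 0"
begin

definition lundberg :: "real set \<Rightarrow> real \<Rightarrow> real" where
  "lundberg A u = \<delta> + \<mu> * u + levy_integral A u - \<sigma>\<^sup>2 / 2 * u\<^sup>2"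

lemma lundberg_root_le:
  assumes "A \<in> sets borel" "0 < a" "0 < b" "lundberg A a \<ge> 0" "lundberg A b = 0"
  shows "a \<le> b"
  using root_le_of_superhomogeneous[OF sigma delta, of "levy_integral A" a b \<mu>]
    levy_integral_superhomogeneous assms
  by (simp add: lundberg_def)

lemma lundberg_UNIV_root_unique:
  "0 < a \<Longrightarrow> 0 < b \<Longrightarrow> lundberg UNIV a = 0 \<Longrightarrow> lundberg UNIV b = 0 \<Longrightarrow> a = b"
  using lundberg_root_le[of UNIV a b] lundberg_root_le[of UNIV b a] by simp

lemma lundberg_root_bounded:
  assumes A: "A \<in> sets borel" and r: "0 < r" "lundberg A r = 0"
  shows "r \<le> max 1 (2 * (\<delta> + \<mu> + (LINT x|M. min 1 x)) / \<sigma>\<^sup>2)"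
proof (cases "r \<le> 1")
  case False
  define C where "C = (LINT x|M. min 1 x)"
  have "levy_integral A r \<le> r * C"
    using levy_integral_le[OF A, of r] False by (simp add: C_def max_def)
  then have "\<sigma>\<^sup>2 / 2 * r * r \<le> \<delta> + \<mu> * r + r * C"
    using r(2) by (simp add: lundberg_def power2_eq_square)
  also have "\<dots> \<le> (\<delta> + \<mu> + C) * r"
    using mult_left_mono[of 1 r \<delta>] False delta by (simp add: algebra_simps)
  finally have "\<sigma>\<^sup>2 / 2 * r \<le> \<delta> + \<mu> + C" using False by simp
  then have "r \<le> 2 * (\<delta> + \<mu> + C) / \<sigma>\<^sup>2" using sigma by (simp add: field_simps)
  then show ?thesis by (simp add: C_def)
qed simp

lemma tendsto_lundberg_root:
  assumes A: "\<And>k. A k \<in> sets borel" "incseq A"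
      "\<And>x. 0 < x \<Longrightarrow> eventually (\<lambda>k. x \<in> A k) sequentially"
    and r: "\<And>k. 0 < r k" "\<And>k. lundberg (A k) (r k) = 0"
  shows "\<exists>L>0. r \<longlonglongrightarrow> L \<and> lundberg UNIV L = 0"
proof -
  have "r m \<le> r n" if "m \<le> n" for m n
  proof (rule lundberg_root_le[OF A(1) r(1) r(1) _ r(2)])
    have "levy_integral (A m) (r m) \<le> levy_integral (A n) (r m)"
      using A(1,2) r(1)[of m] that by (intro levy_integral_mono_set) (auto simp: incseq_def)
    then show "lundberg (A n) (r m) \<ge> 0" using r(2)[of m] by (simp add: lundberg_def)
  qed
  then have "incseq r" by (simp add: incseq_def)
  moreover have "bdd_above (range r)"
    using lundberg_root_bounded[OF A(1) r(1) r(2)] by (auto simp: bdd_above_def)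
  ultimately have lim: "r \<longlonglongrightarrow> (SUP k. r k)" by (rule LIMSEQ_incseq_SUP[rotated])
  define L where "L = (SUP k. r k)"
  have "0 < L" using incseq_le[OF \<open>incseq r\<close> lim, of 0] r(1)[of 0] by (simp add: L_def)
  have "(\<lambda>k. lundberg (A k) (r k)) \<longlonglongrightarrow> lundberg UNIV L"
    unfolding lundberg_def
    using tendsto_levy_integral[OF lim[folded L_def] less_imp_le[OF r(1)] A(1,3)]
    by (intro tendsto_intros lim[folded L_def])
  then have "lundberg UNIV L = 0" using r(2) by (simp add: LIMSEQ_const_iff)
  with \<open>0 < L\<close> lim show ?thesis by (auto simp: L_def)
qed

end

lemma levy_measure_levyQ:
  assumes "q \<in> borel_measurable borel" "(\<integral>\<^sup>+ x. ennreal (min 1 x) \<partial>levyQ q) < \<infinity>"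
  shows "levy_measure (levyQ q)"
proof
  show sets: "sets (levyQ q) = sets borel" by (simp add: levyQ_def)
  show AE: "AE x in levyQ q. 0 < x"
    unfolding levyQ_def using assms(1) by (subst AE_density) (auto simp: indicator_def)
  show "integrable (levyQ q) (\<lambda>x. min 1 x)"
  proof (rule integrableI_nonneg)
    show "(\<lambda>x. min 1 x) \<in> borel_measurable (levyQ q)"
      unfolding measurable_cong_sets[OF sets refl] by measurable
    show "AE x in levyQ q. 0 \<le> min 1 x" using AE by eventually_elim simp
  qed (use assms(2) in simp)
qed

lemma eventually_inverse_Suc_le:
  fixes x :: real
  assumes "0 < x"
  shows "eventually (\<lambda>k. 1 / real (Suc k) \<le> x) sequentially"
proof -
  obtain N :: nat where N: "1 / x < real N" using reals_Archimedean2 by blast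
  have "1 / real (Suc k) \<le> x" if "N \<le> k" for k
  proof -
    have "1 / x < real (Suc k)" using N that by linarith
    then show ?thesis using assms by (simp add: field_simps)
  qed
  then show ?thesis by (auto simp: eventually_sequentially)
qed

lemma phiD_eq_iff:
  "phiD \<mu> \<sigma> q r = \<delta> \<longleftrightarrow>
     \<delta> + \<mu> * r + (LINT x|levyQ q. 1 - exp (- r * x)) - \<sigma>\<^sup>2 / 2 * r\<^sup>2 = 0"
proof -
  have "(LINT x|levyQ q. exp (- r * x) - 1) = - (LINT x|levyQ q. 1 - exp (- r * x))"
    by (subst integral_minus[symmetric]) simp
  then show ?thesis by (auto simp: phiD_def algebra_simps)
qed

theorem mainTheorem1:
  fixes \<mu> \<sigma> \<delta> :: real and q :: "real \<Rightarrow> real" and \<rho> :: "nat \<Rightarrow> real"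
  assumes mu: "\<mu> \<ge> 0"
    and sigma: "\<sigma> > 0"
    and delta: "\<delta> \<ge> 0"
    and q_meas: "q \<in> borel_measurable borel"
    and q_nonneg: "\<And>x. x > 0 \<Longrightarrow> q x \<ge> 0"
    and levy: "(\<integral>\<^sup>+ x. ennreal (min 1 x) \<partial>levyQ q) < \<infinity>"
    and rho_pos: "\<And>n. n \<ge> 1 \<Longrightarrow> \<rho> n > 0"
    and rho_eq: "\<And>n. n \<ge> 1 \<Longrightarrow>
        \<delta> - \<sigma>\<^sup>2 / 2 * (\<rho> n)\<^sup>2 + \<mu> * \<rho> n
          + (LINT x:{1 / real n..} | levyQ q. 1 - exp (- \<rho> n * x)) = 0"
  shows "\<exists>r>0. phiD \<mu> \<sigma> q r = \<delta> \<and> (\<forall>r'>0. phiD \<mu> \<sigma> q r' = \<delta> \<longrightarrow> r' = r)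
              \<and> \<rho> \<longlonglongrightarrow> r"
proof -
  interpret lundberg_equation "levyQ q" \<mu> \<sigma> \<delta>
    using levy_measure_levyQ[OF q_meas levy] sigma delta
    by (simp add: lundberg_equation_def lundberg_equation_axioms_def)
  have phiD_iff: "phiD \<mu> \<sigma> q r = \<delta> \<longleftrightarrow> lundberg UNIV r = 0" for r
    by (simp add: phiD_eq_iff lundberg_def levy_integral_UNIV)
  define A where "A k = {1 / real (Suc k)..}" for k
  have "incseq A" by (auto simp: incseq_def A_def frac_le)
  moreover have "eventually (\<lambda>k. x \<in> A k) sequentially" if "0 < x" for x
    using eventually_inverse_Suc_le[OF that] by (simp add: A_def)
  moreover have "lundberg (A k) (\<rho> (Suc k)) = 0" for k
    using rho_eq[of "Suc k"] by (simp add: lundberg_def levy_integral_def A_def)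
  ultimately obtain L where "0 < L" "(\<lambda>k. \<rho> (Suc k)) \<longlonglongrightarrow> L" "lundberg UNIV L = 0"
    using tendsto_lundberg_root[of A "\<lambda>k. \<rho> (Suc k)"] rho_pos by (auto simp: A_def)
  then show ?thesis
    using lundberg_UNIV_root_unique phiD_iff by (intro exI[of _ L]) (auto simp: LIMSEQ_imp_Suc)
qed

end
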